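(* Let $N\ge 2$ and let $p$ be a star path of length $N$ with edge matrix $E$. Every line of reflective symmetry of the shape of $p$ is one of the candidate lines listed below, so the order of reflective symmetry satisfies $0\le O_{ref}\le N$. The candidate lines are: for $N$ even, the $N/2$ lines through a pair of opposite nodes $j$ and $j+N/2$ ($0\le j<N/2$) and the $N/2$ lines passing between the adjacent nodes $j,j+1$ and between the opposite adjacent nodes $j+N/2,\,j+N/2+1$ ($0\le j<N/2$); for $N$ odd, the $N$ lines each passing through exactly one node $j$ (and between the two nodes opposite to it). Moreover, a candidate line is a line of reflective symmetry if and only if: (i) $e_{1n}=-e_{2n}$ for each node $n$ intersected by the line, and (ii) the remaining columns form a negated palindrome with respect to the line, meaning that for every node $n$ not on the line, column $n'$ of $E$ equals the column obtained by negating both entries of column $n$ and re-sorting them in nondecreasing order, where $n'$ is the mirror image of $n$ across the line (i.e. $n'=(c-n)\bmod N$ with $c=2j$ for a line through node $j$ and $c=2j+1$ for a line between nodes $j$ and $j+1$).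
   Context: A path of length $N$ is a vector $p=(p_0,\dots,p_{N-1})$ whose entries are the integers $0,\dots,N-1$ in some order; indices are cyclic, $p_N=p_0$, $s_{-1}=s_{N-1}$; $x\bmod N$ denotes the remainder in $\{0,\dots,N-1\}$. Nodes $0,\dots,N-1$ are placed at equally spaced points clockwise around a circle; the shape of $p$ is the set of chords joining node $p_n$ to node $p_{n+1}$. A line of reflective symmetry is a line through the center of the circle such that reflection across it maps the shape onto itself; $O_{ref}$ is the number of such lines. The path differences are $d_n=p_{n+1}-p_n$, and the steps are $s_n=d_n$ if $|d_n|<N/2$; $s_n=N/2$ if $|d_n|=N/2$; $s_n=d_n-N$ if $d_n>N/2$; $s_n=d_n+N$ if $d_n<-N/2$. $p$ is a star path if $|s_n|\neq1$ for all $n$. The edge matrix $E=(e_{in})\in\mathbb{Z}^{2\times N}$: for node $n$ let $k$ be the index with $p_k=n$; take $s_k$ and $-s_{k-1}$, replace each by $0$ if its absolute value equals $N/2$, and let $e_{1n}\le e_{2n}$ be these two integers sorted in nondecreasing order. *)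

theory Defs
  imports "HOL-Analysis.Analysis"
begin

definition node :: "nat \<Rightarrow> nat \<Rightarrow> complex" where
  "node N k = cis (- 2 * pi * real k / real N)"

text \<open>Direction of the line passing between adjacent nodes j and j+1 (midpoint of the arc).\<close>
definition mid_dir :: "nat \<Rightarrow> nat \<Rightarrow> complex" where
  "mid_dir N j = cis (- pi * real (2 * j + 1) / real N)"

definition line_through :: "complex \<Rightarrow> complex set" where
  "line_through u = {complex_of_real t * u | t. True}"

text \<open>Reflection across the line through the origin with direction u (u nonzero).\<close>
definition reflect :: "complex \<Rightarrow> complex \<Rightarrow> complex" where
  "reflect u z = (u / cnj u) * cnj z"

definition is_path :: "nat \<Rightarrow> (nat \<Rightarrow> nat) \<Rightarrow> bool" where
  "is_path N p \<longleftrightarrow> bij_betw p {..<N} {..<N}"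

definition shape :: "nat \<Rightarrow> (nat \<Rightarrow> nat) \<Rightarrow> complex set set" where
  "shape N p = {closed_segment (node N (p n)) (node N (p (Suc n mod N))) | n. n < N}"

definition is_sym_line :: "nat \<Rightarrow> (nat \<Rightarrow> nat) \<Rightarrow> complex set \<Rightarrow> bool" where
  "is_sym_line N p L \<longleftrightarrow>
     (\<exists>u. u \<noteq> 0 \<and> L = line_through u \<and> (\<lambda>C. reflect u ` C) ` shape N p = shape N p)"

definition O_ref :: "nat \<Rightarrow> (nat \<Rightarrow> nat) \<Rightarrow> nat" where
  "O_ref N p = card {L. is_sym_line N p L}"

definition pdiff :: "nat \<Rightarrow> (nat \<Rightarrow> nat) \<Rightarrow> nat \<Rightarrow> int" where
  "pdiff N p n = int (p (Suc n mod N)) - int (p n)"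

definition step :: "nat \<Rightarrow> (nat \<Rightarrow> nat) \<Rightarrow> nat \<Rightarrow> int" where
  "step N p n = (let d = pdiff N p n in
     if 2 * \<bar>d\<bar> < int N then d
     else if 2 * \<bar>d\<bar> = int N then int N div 2
     else if d > 0 then d - int N
     else d + int N)"

definition star_path :: "nat \<Rightarrow> (nat \<Rightarrow> nat) \<Rightarrow> bool" where
  "star_path N p \<longleftrightarrow> is_path N p \<and> (\<forall>n<N. \<bar>step N p n\<bar> \<noteq> 1)"

definition zero_half :: "nat \<Rightarrow> int \<Rightarrow> int" where
  "zero_half N x = (if 2 * \<bar>x\<bar> = int N then 0 else x)"

definition pos :: "nat \<Rightarrow> (nat \<Rightarrow> nat) \<Rightarrow> nat \<Rightarrow> nat" where
  "pos N p n = (THE k. k < N \<and> p k = n)"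

text \<open>Column n of the edge matrix: (e_{1n}, e_{2n}).\<close>
definition edge_col :: "nat \<Rightarrow> (nat \<Rightarrow> nat) \<Rightarrow> nat \<Rightarrow> int \<times> int" where
  "edge_col N p n = (let k = pos N p n;
                         a = zero_half N (step N p k);
                         b = zero_half N (- step N p ((k + N - 1) mod N))
                     in (min a b, max a b))"

definition neg_sort :: "int \<times> int \<Rightarrow> int \<times> int" where
  "neg_sort x = (min (- fst x) (- snd x), max (- fst x) (- snd x))"

definition candidate_lines :: "nat \<Rightarrow> complex set set" where
  "candidate_lines N = (if even N
     then {line_through (node N j) | j. j < N div 2} \<union> {line_through (mid_dir N j) | j. j < N div 2}
     else {line_through (node N j) | j. j < N})"

definition edge_sym_cond :: "nat \<Rightarrow> (nat \<Rightarrow> nat) \<Rightarrow> complex set \<Rightarrow> nat \<Rightarrow> bool" where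
  "edge_sym_cond N p L c \<longleftrightarrow>
     (\<forall>n<N. node N n \<in> L \<longrightarrow> fst (edge_col N p n) = - snd (edge_col N p n)) \<and>
     (\<forall>n<N. node N n \<notin> L \<longrightarrow>
        edge_col N p (nat ((int c - int n) mod int N)) = neg_sort (edge_col N p n))"

end

theory Submission
  imports Defs "HOL-Library.Real_Mod"
begin

text \<open>
  With \<open>\<omega> = exp (-2\<pi>i/N)\<close>, node \<open>k\<close> is \<open>\<omega>\<^sup>k\<close>, and the reflection across the line with
  direction \<open>u\<close> is \<open>z \<mapsto> (u / cnj u) * cnj z\<close>. A symmetry of the shape maps node 0 to an
  endpoint of a chord, so \<open>u / cnj u = \<omega>\<^sup>c\<close> for some \<open>c < N\<close>; this pins the line down to a
  candidate line, and the reflection acts on the nodes by the mirror map \<open>k \<mapsto> c - k mod N\<close>.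
  Chords determine their endpoints, so the reflection is a symmetry iff the mirror map preserves
  the set of undirected edges of the path. As the mirror map is an involution negating
  differences, this says that the neighbour offsets (mod \<open>N\<close>) of the mirror image of a node
  are the negated neighbour offsets of the node. Column \<open>n\<close> of the edge matrix is the set of
  neighbour offsets of \<open>n\<close>, written with representatives in \<open>(-N/2, N/2)\<close> and with \<open>N/2\<close>
  encoded as 0; this encoding is injective and commutes with negation, so the condition becomes
  \<open>E(c - n) = neg_sort (E n)\<close>, which for a node on the line (its own mirror image) says
  \<open>e\<^sub>1\<^sub>n = - e\<^sub>2\<^sub>n\<close>.
\<close>

section \<open>Nodes as roots of unity\<close>

definition node_int :: "nat \<Rightarrow> int \<Rightarrow> complex" where
  "node_int N t = cis (- 2 * pi * of_int t / of_nat N)"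

lemma node_eq_node_int: "node N k = node_int N (int k)"
  by (simp add: node_def node_int_def)

lemma node_int_add: "node_int N s * node_int N t = node_int N (s + t)"
  by (simp add: node_int_def cis_mult ring_distribs add_divide_distrib diff_divide_distrib)

lemma cnj_node_int: "cnj (node_int N t) = node_int N (- t)"
  by (simp add: node_int_def cis_cnj)

lemma node_int_eq_iff:
  assumes "N > 0"
  shows "node_int N s = node_int N t \<longleftrightarrow> s mod int N = t mod int N"
proof -
  have "node_int N s = node_int N t \<longleftrightarrow> node_int N (s - t) = 1"
    using node_int_add[of N "s - t" t] by (auto simp: node_int_def)
  also have "\<dots> \<longleftrightarrow> (\<exists>n. 2 * pi * of_int (t - s) = 2 * pi * (of_int n * real N))"
    using assms by (simp add: node_int_def cis_eq_1_iff field_simps)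
  also have "\<dots> \<longleftrightarrow> (\<exists>n. of_int (t - s) = of_int n * real N)"
    by simp
  also have "\<dots> \<longleftrightarrow> (\<exists>n. t - s = n * int N)"
    by (metis of_int_eq_iff of_int_mult of_int_of_nat_eq)
  also have "\<dots> \<longleftrightarrow> int N dvd t - s"
    by (auto simp: dvd_def mult.commute)
  also have "\<dots> \<longleftrightarrow> s mod int N = t mod int N"
    using mod_eq_dvd_iff[of t "int N" s] by auto
  finally show ?thesis .
qed

lemma inj_on_node: "inj_on (node N) {..<N}"
  by (intro inj_onI) (auto simp: node_eq_node_int node_int_eq_iff)

definition mirror :: "nat \<Rightarrow> nat \<Rightarrow> nat \<Rightarrow> nat" where
  "mirror N c x = nat ((int c - int x) mod int N)"

lemma int_mirror: "N > 0 \<Longrightarrow> int (mirror N c x) = (int c - int x) mod int N"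
  by (simp add: mirror_def)

lemma mirror_lt: "N > 0 \<Longrightarrow> mirror N c x < N"
  by (simp add: mirror_def nat_less_iff)

lemma mirror_mirror:
  assumes "x < N"
  shows "mirror N c (mirror N c x) = x"
proof -
  have "int (mirror N c (mirror N c x)) = (int c - (int c - int x) mod int N) mod int N"
    using assms by (simp add: int_mirror)
  also have "\<dots> = int x"
    using assms by (simp add: mod_diff_right_eq)
  finally show ?thesis by simp
qed

lemma mirror_diff:
  assumes "N > 0"
  shows "(int (mirror N c y) - int (mirror N c x)) mod int N = (int x - int y) mod int N"
proof -
  have "(int (mirror N c y) - int (mirror N c x)) mod int N =
      ((int c - int y) mod int N - (int c - int x) mod int N) mod int N"
    using assms by (simp add: int_mirror)
  also have "\<dots> = (int x - int y) mod int N"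
    by (simp add: mod_diff_eq)
  finally show ?thesis .
qed

section \<open>Reflections\<close>

lemma linear_reflect: "linear (reflect u)"
  by (rule linearI) (simp_all add: reflect_def algebra_simps scaleR_conv_of_real)

lemma reflect_on_line: "v \<noteq> 0 \<Longrightarrow> z \<in> line_through v \<Longrightarrow> reflect v z = z"
  by (auto simp: line_through_def reflect_def)

lemma line_through_of_real_mult:
  assumes "r \<noteq> 0"
  shows "line_through (of_real r * v) = line_through v"
proof -
  have "of_real t * v = of_real (t / r) * (of_real r * v)" for t
    using assms by simp
  then show ?thesis
    unfolding line_through_def by (metis mult.assoc of_real_mult)
qed

lemma line_through_eq_iff:
  assumes "u \<noteq> 0" and "v \<noteq> 0"
  shows "line_through u = line_through v \<longleftrightarrow> u / cnj u = v / cnj v"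
proof
  assume "line_through u = line_through v"
  moreover have "u \<in> line_through u"
    unfolding line_through_def by (metis (mono_tags) mem_Collect_eq mult_1 of_real_1)
  ultimately obtain t where "u = of_real t * v"
    unfolding line_through_def by auto
  then show "u / cnj u = v / cnj v"
    using assms by auto
next
  assume "u / cnj u = v / cnj v"
  then have "cnj (u / v) = u / v"
    using assms by (simp add: field_simps)
  then have "u = of_real (Re (u / v)) * v"
    using assms by (metis Reals_cnj_iff nonzero_eq_divide_eq of_real_Re)
  moreover from this have "Re (u / v) \<noteq> 0"
    using assms by auto
  ultimately show "line_through u = line_through v"
    by (metis line_through_of_real_mult)
qed

lemma is_sym_line_line_through_iff:
  assumes "v \<noteq> 0"
  shows "is_sym_line N p (line_through v) \<longleftrightarrow> (\<lambda>C. reflect v ` C) ` shape N p = shape N p"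
proof -
  have "reflect u = reflect v" if "u \<noteq> 0" and "line_through v = line_through u" for u
    using that assms line_through_eq_iff[of u v] by (auto simp: reflect_def)
  then show ?thesis
    using assms unfolding is_sym_line_def by metis
qed

lemma reflect_node:
  assumes "N > 0" and "v / cnj v = node_int N (int c)"
  shows "reflect v (node N k) = node N (mirror N c k)"
  using assms by (simp add: reflect_def node_eq_node_int cnj_node_int node_int_add int_mirror
      node_int_eq_iff)

lemma reflect_factor_node: "node N j / cnj (node N j) = node_int N (int (2 * j))"
  by (simp add: node_def node_int_def cis_cnj cis_divide field_simps)

lemma reflect_factor_mid_dir: "mid_dir N j / cnj (mid_dir N j) = node_int N (int (2 * j + 1))"
  by (simp add: mid_dir_def node_int_def cis_cnj cis_divide field_simps)

lemma node_ne_zero: "node N j \<noteq> 0"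
  by (simp add: node_def)

lemma mid_dir_ne_zero: "mid_dir N j \<noteq> 0"
  by (simp add: mid_dir_def)

section \<open>Paths and their undirected edges\<close>

lemma path_lt: "is_path N p \<Longrightarrow> n < N \<Longrightarrow> p n < N"
  unfolding is_path_def bij_betw_def by auto

lemma path_inj: "is_path N p \<Longrightarrow> a < N \<Longrightarrow> b < N \<Longrightarrow> p a = p b \<Longrightarrow> a = b"
  unfolding is_path_def bij_betw_def inj_on_def by auto

lemma
  assumes "is_path N p" and "x < N"
  shows pos_lt: "pos N p x < N" and path_pos: "p (pos N p x) = x"
proof -
  have "x \<in> p ` {..<N}"
    using assms unfolding is_path_def bij_betw_def by auto
  then have "\<exists>!k. k < N \<and> p k = x"
    using path_inj[OF assms(1)] by blast
  then have "pos N p x < N \<and> p (pos N p x) = x"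
    unfolding pos_def by (rule theI')
  then show "pos N p x < N" and "p (pos N p x) = x"
    by auto
qed

lemma Suc_mod_eq_iff_pred:
  assumes "n < N" and "k < N"
  shows "Suc n mod N = k \<longleftrightarrow> n = (k + N - 1) mod N"
proof (cases k)
  case 0
  then show ?thesis
    using assms by (cases "Suc n = N") auto
next
  case (Suc m)
  then have "(k + N - 1) mod N = m"
    using assms by (simp add: mod_add_right_eq[symmetric])
  then show ?thesis
    using assms Suc by (cases "Suc n = N") auto
qed

definition edges :: "nat \<Rightarrow> (nat \<Rightarrow> nat) \<Rightarrow> nat set set" where
  "edges N p = (\<lambda>n. {p n, p (Suc n mod N)}) ` {..<N}"

lemma edgesE:
  assumes "is_path N p" and "e \<in> edges N p"
  obtains x y where "e = {x, y}" and "x < N" and "y < N"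
  using assms path_lt[OF assms(1)] unfolding edges_def by fastforce

lemma mem_edges_iff_neighbour:
  assumes P: "is_path N p" and x: "x < N"
  shows "{x, y} \<in> edges N p \<longleftrightarrow>
    y = p (Suc (pos N p x) mod N) \<or> y = p ((pos N p x + N - 1) mod N)"
proof -
  define k where "k = pos N p x"
  define j where "j = (k + N - 1) mod N"
  have k: "k < N" "p k = x"
    using pos_lt[OF P x] path_pos[OF P x] by (simp_all add: k_def)
  have j: "j < N" "Suc j mod N = k"
    using k(1) Suc_mod_eq_iff_pred[of j N k] by (auto simp: j_def)
  have at_k: "p n = x \<longleftrightarrow> n = k" if "n < N" for n
    using path_inj[OF P that k(1)] k by auto
  have at_j: "p (Suc n mod N) = x \<longleftrightarrow> n = j" if "n < N" for n
    using at_k[of "Suc n mod N"] Suc_mod_eq_iff_pred[OF that k(1)] that by (simp add: j_def)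
  have "{x, y} \<in> edges N p \<longleftrightarrow>
      (\<exists>n<N. p n = x \<and> p (Suc n mod N) = y) \<or> (\<exists>n<N. p (Suc n mod N) = x \<and> p n = y)"
    unfolding edges_def by (auto simp: doubleton_eq_iff)
  also have "\<dots> \<longleftrightarrow> y = p (Suc k mod N) \<or> y = p j"
    using at_k at_j k(1) j(1) by auto
  finally show ?thesis
    by (simp add: k_def j_def)
qed

section \<open>Neighbour offsets and edge columns\<close>

definition offsets :: "nat \<Rightarrow> (nat \<Rightarrow> nat) \<Rightarrow> nat \<Rightarrow> int set" where
  "offsets N p x = {(int y - int x) mod int N | y. y < N \<and> {x, y} \<in> edges N p}"

lemma step_mod: "step N p n mod int N = pdiff N p n mod int N"
proof -
  have "int N div 2 mod int N = d mod int N" if "2 * \<bar>d\<bar> = int N" for d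
  proof (cases "d \<ge> 0")
    case True
    then have "int N div 2 = d" using that by auto
    then show ?thesis by simp
  next
    case False
    then have "int N div 2 = d + int N" using that by auto
    then show ?thesis by simp
  qed
  then show ?thesis
    unfolding step_def Let_def by auto
qed

lemma abs_step_le:
  assumes "is_path N p" and "n < N"
  shows "2 * \<bar>step N p n\<bar> \<le> int N"
proof -
  have "p n < N" "p (Suc n mod N) < N"
    using assms path_lt[OF assms(1)] by auto
  then have "\<bar>pdiff N p n\<bar> < int N"
    unfolding pdiff_def by auto
  then show ?thesis
    unfolding step_def Let_def by auto
qed

lemma offsets_eq:
  assumes P: "is_path N p" and x: "x < N"
  shows "offsets N p x = {step N p (pos N p x) mod int N,
                          (- step N p ((pos N p x + N - 1) mod N)) mod int N}"
proof -
  define k where "k = pos N p x"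
  define j where "j = (k + N - 1) mod N"
  have k: "k < N" "p k = x"
    using pos_lt[OF P x] path_pos[OF P x] by (simp_all add: k_def)
  have j: "j < N" "Suc j mod N = k"
    using k(1) Suc_mod_eq_iff_pred[of j N k] by (auto simp: j_def)
  have "offsets N p x = {(int y - int x) mod int N | y. y = p (Suc k mod N) \<or> y = p j}"
    unfolding offsets_def mem_edges_iff_neighbour[OF P x]
    using path_lt[OF P] k j by (auto simp: k_def j_def)
  also have "\<dots> = {pdiff N p k mod int N, (- pdiff N p j) mod int N}"
    using k j by (auto simp: pdiff_def)
  also have "\<dots> = {step N p k mod int N, (- step N p j) mod int N}"
    by (metis step_mod mod_minus_cong)
  finally show ?thesis
    by (simp add: k_def j_def)
qed

lemma offsets_subset:
  assumes P: "is_path N p" and N: "N \<ge> 2" and x: "x < N"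
  shows "offsets N p x \<subseteq> {1..<int N}"
proof
  fix t
  assume "t \<in> offsets N p x"
  then obtain y where y: "t = (int y - int x) mod int N" "y < N" "{x, y} \<in> edges N p"
    unfolding offsets_def by auto
  have "y \<noteq> x"
  proof
    assume "y = x"
    then obtain n where n: "n < N" "p n = x" "p (Suc n mod N) = x"
      using y(3) unfolding edges_def by (auto simp: doubleton_eq_iff)
    then have "n = Suc n mod N"
      using path_inj[OF P] N by auto
    then show False
      using n(1) N by (cases "Suc n = N") auto
  qed
  then have "int y mod int N \<noteq> int x mod int N"
    using x y(2) by simp
  then have "t \<noteq> 0"
    using y(1) by (simp add: mod_eq_dvd_iff dvd_eq_mod_eq_0)
  moreover have "0 \<le> t" "t < int N"
    using N y(1) by auto
  ultimately show "t \<in> {1..<int N}"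
    by auto
qed

definition centred_rep :: "nat \<Rightarrow> int \<Rightarrow> int" where
  "centred_rep N r = (if 2 * r < int N then r else if 2 * r = int N then 0 else r - int N)"

definition neg_mod :: "nat \<Rightarrow> int \<Rightarrow> int" where
  "neg_mod N t = (- t) mod int N"

lemma zero_half_eq_centred_rep:
  assumes "2 * \<bar>a\<bar> \<le> int N"
  shows "zero_half N a = centred_rep N (a mod int N)"
proof (cases "a \<ge> 0")
  case True
  then have "a mod int N = a"
    using assms by (cases "a = 0") (auto intro: mod_pos_pos_trivial)
  then show ?thesis
    using True assms unfolding zero_half_def centred_rep_def by auto
next
  case False
  then have "a mod int N = a + int N"
    using assms mod_pos_pos_trivial[of "a + int N" "int N"] by auto
  then show ?thesis
    using False assms unfolding zero_half_def centred_rep_def by auto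
qed

lemma inj_on_centred_rep: "inj_on (centred_rep N) {1..<int N}"
  unfolding inj_on_def centred_rep_def by (simp split: if_splits)

lemma neg_mod_eq: "t \<in> {1..<int N} \<Longrightarrow> neg_mod N t = int N - t"
  unfolding neg_mod_def using mod_pos_pos_trivial[of "int N - t" "int N"] by auto

lemma centred_rep_neg_mod:
  "t \<in> {1..<int N} \<Longrightarrow> centred_rep N (neg_mod N t) = - centred_rep N t"
  by (auto simp: neg_mod_eq centred_rep_def)

lemma neg_mod_mem: "t \<in> {1..<int N} \<Longrightarrow> neg_mod N t \<in> {1..<int N}"
  by (auto simp: neg_mod_eq)

lemma neg_mod_neg_mod: "t \<in> {1..<int N} \<Longrightarrow> neg_mod N (neg_mod N t) = t"
  by (simp add: neg_mod_eq neg_mod_mem)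

lemma sorted_pair_eq_iff:
  fixes a b c d :: "'a::linorder"
  shows "(min a b, max a b) = (min c d, max c d) \<longleftrightarrow> {a, b} = {c, d}"
  by (cases "a \<le> b"; cases "c \<le> d") (auto simp: doubleton_eq_iff min_def max_def)

lemma edge_col_eq_centred_offsets:
  assumes P: "is_path N p" and x: "x < N"
  obtains A B where "offsets N p x = {A, B}"
    and "edge_col N p x = (min (centred_rep N A) (centred_rep N B),
                           max (centred_rep N A) (centred_rep N B))"
proof -
  define k where "k = pos N p x"
  define a where "a = step N p k"
  define b where "b = - step N p ((k + N - 1) mod N)"
  have "2 * \<bar>a\<bar> \<le> int N" "2 * \<bar>b\<bar> \<le> int N"
    using abs_step_le[OF P] pos_lt[OF P x] x by (auto simp: a_def b_def k_def)
  then have "edge_col N p x = (min (centred_rep N (a mod int N)) (centred_rep N (b mod int N)),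
                               max (centred_rep N (a mod int N)) (centred_rep N (b mod int N)))"
    unfolding edge_col_def Let_def k_def[symmetric] a_def[symmetric] b_def[symmetric]
    by (simp add: zero_half_eq_centred_rep)
  moreover have "offsets N p x = {a mod int N, b mod int N}"
    unfolding offsets_eq[OF P x] a_def b_def k_def ..
  ultimately show ?thesis
    using that by blast
qed

lemma edge_col_eq_neg_sort_iff:
  assumes P: "is_path N p" and N: "N \<ge> 2" and x: "x < N" and y: "y < N"
  shows "edge_col N p y = neg_sort (edge_col N p x) \<longleftrightarrow>
    offsets N p y = neg_mod N ` offsets N p x"
proof -
  obtain A B where AB: "offsets N p x = {A, B}"
    "edge_col N p x = (min (centred_rep N A) (centred_rep N B),
                       max (centred_rep N A) (centred_rep N B))"
    using edge_col_eq_centred_offsets[OF P x] by blast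
  obtain C D where CD: "offsets N p y = {C, D}"
    "edge_col N p y = (min (centred_rep N C) (centred_rep N D),
                       max (centred_rep N C) (centred_rep N D))"
    using edge_col_eq_centred_offsets[OF P y] by blast
  have bounds: "{A, B} \<subseteq> {1..<int N}" "{C, D} \<subseteq> {1..<int N}"
    "neg_mod N ` {A, B} \<subseteq> {1..<int N}"
    using offsets_subset[OF P N x] offsets_subset[OF P N y] AB CD neg_mod_mem by auto
  have "neg_sort (edge_col N p x) = (min (- centred_rep N A) (- centred_rep N B),
                                     max (- centred_rep N A) (- centred_rep N B))"
    unfolding AB neg_sort_def by auto
  then have "edge_col N p y = neg_sort (edge_col N p x) \<longleftrightarrow>
      {centred_rep N C, centred_rep N D} = {- centred_rep N A, - centred_rep N B}"
    unfolding CD sorted_pair_eq_iff[symmetric] by simp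
  also have "\<dots> \<longleftrightarrow> centred_rep N ` {C, D} = centred_rep N ` neg_mod N ` {A, B}"
    using bounds(1) centred_rep_neg_mod by simp
  also have "\<dots> \<longleftrightarrow> {C, D} = neg_mod N ` {A, B}"
    using inj_on_image_eq_iff[OF inj_on_centred_rep bounds(2,3)] .
  finally show ?thesis
    unfolding AB CD .
qed

section \<open>Mirror-invariant edge sets\<close>

lemma image_image_eq_iff_involution:
  assumes "\<forall>e\<in>E. f ` f ` e = e"
  shows "(`) f ` E = E \<longleftrightarrow> (\<forall>e\<in>E. f ` e \<in> E)"
proof
  assume closed: "\<forall>e\<in>E. f ` e \<in> E"
  show "(`) f ` E = E"
  proof
    show "E \<subseteq> (`) f ` E"
      using assms closed by (metis image_eqI subsetI)
  qed (use closed in auto)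
qed auto

lemma involution_image_subset_imp_eq:
  assumes "\<forall>x\<in>A. \<sigma> x \<in> A \<and> \<sigma> (\<sigma> x) = x"
    and "\<forall>x\<in>A. \<forall>t\<in>F x. g (g t) = t"
    and "\<forall>x\<in>A. g ` F x \<subseteq> F (\<sigma> x)"
  shows "\<forall>x\<in>A. F (\<sigma> x) = g ` F x"
proof
  fix x
  assume x: "x \<in> A"
  have "t \<in> g ` F x" if "t \<in> F (\<sigma> x)" for t
  proof -
    have "g t \<in> F x"
      using assms x that by (metis image_subset_iff)
    moreover have "t = g (g t)"
      using assms x that by metis
    ultimately show ?thesis
      by blast
  qed
  then show "F (\<sigma> x) = g ` F x"
    using assms x by blast
qed

lemma mirror_edges_subset_iff_offsets:
  assumes P: "is_path N p" and N: "N > 0"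
  shows "(\<forall>e\<in>edges N p. mirror N c ` e \<in> edges N p) \<longleftrightarrow>
    (\<forall>x<N. neg_mod N ` offsets N p x \<subseteq> offsets N p (mirror N c x))"
proof
  assume H: "\<forall>e\<in>edges N p. mirror N c ` e \<in> edges N p"
  show "\<forall>x<N. neg_mod N ` offsets N p x \<subseteq> offsets N p (mirror N c x)"
  proof (intro allI impI subsetI)
    fix x t
    assume "x < N" and "t \<in> neg_mod N ` offsets N p x"
    then obtain y where y: "t = neg_mod N ((int y - int x) mod int N)" "{x, y} \<in> edges N p"
      unfolding offsets_def by auto
    have "{mirror N c x, mirror N c y} \<in> edges N p"
      using H y(2) by force
    moreover have "t = (int (mirror N c y) - int (mirror N c x)) mod int N"
      using y(1) N by (simp add: neg_mod_def mirror_diff mod_minus_eq)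
    ultimately show "t \<in> offsets N p (mirror N c x)"
      unfolding offsets_def using mirror_lt[OF N] by blast
  qed
next
  assume H: "\<forall>x<N. neg_mod N ` offsets N p x \<subseteq> offsets N p (mirror N c x)"
  show "\<forall>e\<in>edges N p. mirror N c ` e \<in> edges N p"
  proof
    fix e
    assume e: "e \<in> edges N p"
    then obtain x y where xy: "e = {x, y}" "x < N" "y < N"
      using edgesE[OF P] by blast
    have "(int y - int x) mod int N \<in> offsets N p x"
      unfolding offsets_def using xy e by auto
    then have "neg_mod N ((int y - int x) mod int N) \<in> offsets N p (mirror N c x)"
      using H xy by blast
    then obtain z where z: "(int z - int (mirror N c x)) mod int N =
        (int (mirror N c y) - int (mirror N c x)) mod int N"
      "z < N" "{mirror N c x, z} \<in> edges N p"
      unfolding offsets_def using N by (auto simp: neg_mod_def mirror_diff mod_minus_eq)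
    then have "int z mod int N = int (mirror N c y) mod int N"
      by (metis diff_add_cancel mod_add_left_eq)
    then have "z = mirror N c y"
      using z(2) mirror_lt[OF N] by simp
    then show "mirror N c ` e \<in> edges N p"
      using z(3) xy by simp
  qed
qed

lemma mirror_edges_eq_iff_edge_col:
  assumes P: "is_path N p" and N: "N \<ge> 2"
  shows "(`) (mirror N c) ` edges N p = edges N p \<longleftrightarrow>
    (\<forall>x<N. edge_col N p (mirror N c x) = neg_sort (edge_col N p x))"
proof -
  have "mirror N c ` mirror N c ` e = e" if "e \<in> edges N p" for e
    by (rule edgesE[OF P that]) (simp add: mirror_mirror)
  then have "(`) (mirror N c) ` edges N p = edges N p \<longleftrightarrow>
      (\<forall>x<N. neg_mod N ` offsets N p x \<subseteq> offsets N p (mirror N c x))"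
    using image_image_eq_iff_involution[of "edges N p" "mirror N c"]
      mirror_edges_subset_iff_offsets[OF P, of c] N by simp
  also have "\<dots> \<longleftrightarrow> (\<forall>x<N. offsets N p (mirror N c x) = neg_mod N ` offsets N p x)"
  proof
    assume "\<forall>x<N. neg_mod N ` offsets N p x \<subseteq> offsets N p (mirror N c x)"
    moreover have "\<forall>x\<in>{..<N}. \<forall>t\<in>offsets N p x. neg_mod N (neg_mod N t) = t"
      using offsets_subset[OF P N] neg_mod_neg_mod by blast
    moreover have "\<forall>x\<in>{..<N}. mirror N c x \<in> {..<N} \<and> mirror N c (mirror N c x) = x"
      using mirror_lt mirror_mirror N by simp
    ultimately show "\<forall>x<N. offsets N p (mirror N c x) = neg_mod N ` offsets N p x"
      using involution_image_subset_imp_eq[of "{..<N}" "mirror N c" "offsets N p" "neg_mod N"]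
      by simp
  qed auto
  also have "\<dots> \<longleftrightarrow> (\<forall>x<N. edge_col N p (mirror N c x) = neg_sort (edge_col N p x))"
    using edge_col_eq_neg_sort_iff[OF P N] mirror_lt N by simp
  finally show ?thesis .
qed

section \<open>Symmetries of the shape\<close>

definition chord :: "nat \<Rightarrow> nat set \<Rightarrow> complex set" where
  "chord N e = convex hull (node N ` e)"

lemma chord_doubleton: "chord N {a, b} = closed_segment (node N a) (node N b)"
  by (simp add: chord_def segment_convex_hull)

lemma shape_eq_chord_image: "shape N p = chord N ` edges N p"
  unfolding shape_def edges_def by (auto simp: chord_doubleton image_iff)

lemma inj_on_chord: "inj_on (chord N) {{a, b} | a b. a < N \<and> b < N}"
proof (rule inj_onI)
  fix e f
  assume "e \<in> {{a, b} | a b. a < N \<and> b < N}" "f \<in> {{a, b} | a b. a < N \<and> b < N}"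
    and eq: "chord N e = chord N f"
  then obtain a b c d where abcd: "e = {a, b}" "f = {c, d}" "{a, b} \<subseteq> {..<N}" "{c, d} \<subseteq> {..<N}"
    by auto
  then have "node N ` {a, b} = node N ` {c, d}"
    using eq by (simp add: chord_doubleton)
  then show "e = f"
    using inj_on_image_eq_iff[OF inj_on_node abcd(3,4)] abcd(1,2) by simp
qed

lemma reflect_chord:
  assumes "N > 0" and "v / cnj v = node_int N (int c)"
  shows "reflect v ` chord N e = chord N (mirror N c ` e)"
  unfolding chord_def convex_hull_linear_image[OF linear_reflect] image_image
  using reflect_node[OF assms] by simp

lemma is_sym_line_iff_mirror_edges:
  assumes P: "is_path N p" and N: "N > 0" and v: "v \<noteq> 0"
    and c: "v / cnj v = node_int N (int c)"
  shows "is_sym_line N p (line_through v) \<longleftrightarrow> (`) (mirror N c) ` edges N p = edges N p"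
proof -
  let ?D = "{{a, b} | a b. a < N \<and> b < N}"
  have "e \<in> ?D" and "mirror N c ` e \<in> ?D" if "e \<in> edges N p" for e
    by (rule edgesE[OF P that], use mirror_lt[OF N] in auto)+
  then have D: "edges N p \<subseteq> ?D" "(`) (mirror N c) ` edges N p \<subseteq> ?D"
    by blast+
  have "is_sym_line N p (line_through v) \<longleftrightarrow>
      chord N ` (`) (mirror N c) ` edges N p = chord N ` edges N p"
    unfolding is_sym_line_line_through_iff[OF v] shape_eq_chord_image image_image
      reflect_chord[OF N c] ..
  also have "\<dots> \<longleftrightarrow> (`) (mirror N c) ` edges N p = edges N p"
    by (rule inj_on_image_eq_iff[OF inj_on_chord D(2,1)])
  finally show ?thesis .
qed

lemma edge_col_fixed_iff: "edge_col N p n = neg_sort (edge_col N p n) \<longleftrightarrow>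
    fst (edge_col N p n) = - snd (edge_col N p n)"
  unfolding edge_col_def neg_sort_def Let_def by auto

lemma is_sym_line_iff_edge_sym_cond:
  assumes P: "is_path N p" and N: "N \<ge> 2" and v: "v \<noteq> 0"
    and c: "v / cnj v = node_int N (int c)"
  shows "is_sym_line N p (line_through v) \<longleftrightarrow> edge_sym_cond N p (line_through v) c"
proof -
  have N0: "N > 0"
    using N by simp
  have on_line: "edge_col N p (mirror N c n) = neg_sort (edge_col N p n) \<longleftrightarrow>
      fst (edge_col N p n) = - snd (edge_col N p n)"
    if "n < N" and "node N n \<in> line_through v" for n
  proof -
    have "node N (mirror N c n) = node N n"
      using reflect_node[OF N0 c, of n] reflect_on_line[OF v that(2)] by simp
    then have "mirror N c n = n"
      using inj_onD[OF inj_on_node] mirror_lt[OF N0] that(1) by blast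
    then show ?thesis
      by (simp add: edge_col_fixed_iff)
  qed
  have "edge_sym_cond N p (line_through v) c \<longleftrightarrow>
      (\<forall>x<N. edge_col N p (mirror N c x) = neg_sort (edge_col N p x))"
    unfolding edge_sym_cond_def mirror_def[symmetric] using on_line by auto
  then show ?thesis
    using is_sym_line_iff_mirror_edges[OF P N0 v c] mirror_edges_eq_iff_edge_col[OF P N] by simp
qed

section \<open>Candidate lines\<close>

lemma sym_reflect_factor:
  assumes P: "is_path N p" and N: "N > 0" and u: "u \<noteq> 0"
    and sym: "(\<lambda>C. reflect u ` C) ` shape N p = shape N p"
  obtains m where "m < N" and "u / cnj u = node_int N (int m)"
proof -
  obtain k where k: "k < N" "p k = 0"
    using pos_lt[OF P N] path_pos[OF P N] by blast
  let ?a = "node N 0" and ?b = "node N (p (Suc k mod N))"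
  have "closed_segment ?a ?b \<in> shape N p"
    unfolding shape_def using k by force
  then have "closed_segment (reflect u ?a) (reflect u ?b) \<in> shape N p"
    using sym closed_segment_linear_image[OF linear_reflect] by (metis image_eqI)
  then obtain n where "n < N"
    and "{reflect u ?a, reflect u ?b} = {node N (p n), node N (p (Suc n mod N))}"
    unfolding shape_def by auto
  moreover have "reflect u ?a = u / cnj u"
    by (simp add: reflect_def node_def)
  moreover have "p n < N" "p (Suc n mod N) < N"
    using path_lt[OF P] \<open>n < N\<close> N by auto
  ultimately show ?thesis
    using that by (auto simp: doubleton_eq_iff node_eq_node_int)
qed

lemma line_through_eq_node:
  "u \<noteq> 0 \<Longrightarrow> u / cnj u = node_int N (int (2 * j)) \<Longrightarrow> line_through u = line_through (node N j)"
  by (simp add: line_through_eq_iff node_ne_zero reflect_factor_node)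

lemma line_through_eq_mid_dir:
  "u \<noteq> 0 \<Longrightarrow> u / cnj u = node_int N (int (2 * j + 1)) \<Longrightarrow>
    line_through u = line_through (mid_dir N j)"
  by (simp add: line_through_eq_iff mid_dir_ne_zero reflect_factor_mid_dir)

lemma sym_line_mem_candidate_lines:
  assumes P: "is_path N p" and N: "N > 0" and L: "is_sym_line N p L"
  shows "L \<in> candidate_lines N"
proof -
  obtain u where u: "u \<noteq> 0" "L = line_through u"
    and sym: "(\<lambda>C. reflect u ` C) ` shape N p = shape N p"
    using L unfolding is_sym_line_def by blast
  obtain m where m: "m < N" "u / cnj u = node_int N (int m)"
    using sym_reflect_factor[OF P N u(1) sym] .
  consider "even N" "even m" | "even N" "odd m" | "odd N" "even m" | "odd N" "odd m"
    by blast
  then show ?thesis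
  proof cases
    case 1
    then have "L = line_through (node N (m div 2))" "m div 2 < N div 2"
      using u m line_through_eq_node[of u N "m div 2"] by auto
    then show ?thesis
      using 1 unfolding candidate_lines_def by auto
  next
    case 2
    then have "L = line_through (mid_dir N (m div 2))" "m div 2 < N div 2"
      using u m line_through_eq_mid_dir[of u N "m div 2"] by auto
    then show ?thesis
      using 2 unfolding candidate_lines_def by auto
  next
    case 3
    then have "L = line_through (node N (m div 2))" "m div 2 < N"
      using u m line_through_eq_node[of u N "m div 2"] by auto
    then show ?thesis
      using 3 unfolding candidate_lines_def by auto
  next
    case 4
    then have "node_int N (int (2 * ((m + N) div 2))) = node_int N (int m)"
      using N by (simp add: node_int_eq_iff)
    then have "L = line_through (node N ((m + N) div 2))" "(m + N) div 2 < N"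
      using u m line_through_eq_node[of u N "(m + N) div 2"] by auto
    then show ?thesis
      using 4 unfolding candidate_lines_def by auto
  qed
qed

lemma candidate_lines_eq:
  "candidate_lines N = (if even N
     then (\<lambda>j. line_through (node N j)) ` {..<N div 2} \<union>
          (\<lambda>j. line_through (mid_dir N j)) ` {..<N div 2}
     else (\<lambda>j. line_through (node N j)) ` {..<N})"
  unfolding candidate_lines_def by auto

lemma finite_candidate_lines: "finite (candidate_lines N)"
  by (simp add: candidate_lines_eq)

lemma card_candidate_lines_le: "card (candidate_lines N) \<le> N"
proof -
  let ?node_lines = "\<lambda>M. (\<lambda>j. line_through (node N j)) ` {..<M}"
  let ?mid_lines = "(\<lambda>j. line_through (mid_dir N j)) ` {..<N div 2}"
  have node_lines: "card (?node_lines M) \<le> M" for M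
    using card_image_le[of "{..<M}"] by simp
  moreover have "card ?mid_lines \<le> N div 2"
    using card_image_le[of "{..<N div 2}"] by simp
  moreover have "card (?node_lines (N div 2) \<union> ?mid_lines) \<le> N" if "even N"
    using card_Un_le[of "?node_lines (N div 2)" ?mid_lines] node_lines[of "N div 2"]
      \<open>card ?mid_lines \<le> N div 2\<close> that by linarith
  ultimately show ?thesis
    by (simp add: candidate_lines_eq)
qed

theorem mainTheorem7:
  fixes N :: nat and p :: "nat \<Rightarrow> nat"
  assumes "N \<ge> 2" and "star_path N p"
  shows "{L. is_sym_line N p L} \<subseteq> candidate_lines N
    \<and> 0 \<le> O_ref N p \<and> O_ref N p \<le> N
    \<and> (even N \<longrightarrow> (\<forall>j < N div 2.
           (is_sym_line N p (line_through (node N j)) \<longleftrightarrow>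
            edge_sym_cond N p (line_through (node N j)) (2 * j)) \<and>
           (is_sym_line N p (line_through (mid_dir N j)) \<longleftrightarrow>
            edge_sym_cond N p (line_through (mid_dir N j)) (2 * j + 1))))
    \<and> (odd N \<longrightarrow> (\<forall>j < N.
           is_sym_line N p (line_through (node N j)) \<longleftrightarrow>
           edge_sym_cond N p (line_through (node N j)) (2 * j)))"
proof -
  have P: "is_path N p"
    using assms(2) unfolding star_path_def by simp
  have sub: "{L. is_sym_line N p L} \<subseteq> candidate_lines N"
    using sym_line_mem_candidate_lines[OF P] assms(1) by auto
  then have "O_ref N p \<le> N"
    unfolding O_ref_def
    using card_mono[OF finite_candidate_lines] card_candidate_lines_le le_trans by metis
  moreover note is_sym_line_iff_edge_sym_cond[OF P assms(1) node_ne_zero reflect_factor_node]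
    is_sym_line_iff_edge_sym_cond[OF P assms(1) mid_dir_ne_zero reflect_factor_mid_dir]
  ultimately show ?thesis
    using sub by simp
qed

end
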